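(* Let $\mathcal{H}_{1}$, $\mathcal{H}_{2}$ and $\mathcal{G}$ be three pdCGs such that both $\mathcal{H}_{1}$ and $\mathcal{H}_{2}$ are covered by $\mathcal{G}$ in the model inclusion order or, equivalently, such that $\mathcal{P}(\mathcal{H}_{1})$ and $\mathcal{P}(\mathcal{H}_{2})$ are two neighbouring submodels of $\mathcal{P}(\mathcal{G})$. Then, if $\mathcal{H}_{1}$ and $\mathcal{H}_{2}$ are $\preceq_{t}$-incomparable, it holds that $\mathcal{H}_{1}\wedge_{s}\mathcal{H}_{2}=\mathcal{H}_{1}\wedge_{t}\mathcal{H}_{2}$. On the other hand, if $\mathcal{H}_{1}\preceq_{t}\mathcal{H}_{2}$ then $\mathcal{H}_{1}\wedge_{s}\mathcal{H}_{2}=\mathcal{H}_{1}\wedge_{t}\mathcal{H}_{1}^{\prime}$ where, for the edge $(i,j)\in\mathbb E_{\mathcal G}$ involved, $\mathcal{H}_{1}$ and $\mathcal{H}_{1}^{\prime}$ are the two graphs $(V, E_{\mathcal{G}}\setminus\{(i,j)\}, \mathbb{L}_{\mathcal{G}}, \mathbb{E}_{\mathcal{G}} \setminus \{(i,j)\})$ and $(V, E_{\mathcal{G}}\setminus\{\tau(i,j)\}, \mathbb{L}_{\mathcal{G}}, \mathbb{E}_{\mathcal{G}} \setminus \{(i,j)\})$ (one each).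
   Context: Let $V=\{1,\dots,p\}$ and let $\tau$ be a twin-pairing function on $V$, i.e. $\tau(i)\in V$ with $\tau(\tau(i))=i$ and $\tau(i)\neq i$; it is extended to edges by $\tau(i,j)=(\tau(i),\tau(j))$ (endpoints reordered so the smaller comes first) and to sets elementwise. Fix a partition $(L,R)$ of $V$ with $\tau(L)=R$, numbered so that $L=\{1,\dots,q\}$, $R=\{q+1,\dots,p\}$. Let $F_V=\{(i,j): i,j\in V, i<j\}$, $F_L=\{(i,j)\in F_V: i<\tau(j)\}$, $F_R=\{(i,j)\in F_V: i>\tau(j)\}$. A coloured graph $\mathcal G=(\mathcal V,\mathcal E)$ consists of a partition $\mathcal V$ of $V$ into vertex colour classes and a partition $\mathcal E$ of an edge set $E\subseteq F_V$ into edge colour classes. It is a coloured graph for paired data (pdCG) if every colour class is either atomic (a single element) or twin-pairing (of the form $\{i,\tau(i)\}$ or $\{(i,j),\tau(i,j)\}$ with $(i,j)\neq\tau(i,j)$). The associated RCON model for paired data $\mathcal{P}(\mathcal G)$ is the family of Gaussian distributions whose concentration matrix has zero entries for missing edges and equal entries for vertices or edges in the same colour class; $\mathcal{P}$ denotes the family of all pdCGs on $V$. Every pdCG is equivalently represented by the quadruplet $(V,E,\mathbb L,\mathbb E)$ where $E$ is the union of the edge colour classes, $E_L=E\cap F_L$, $E_R=E\cap F_R$, $\mathbb L=\{i\in L:\{i\}\in\mathcal V\}$ and $\mathbb E=\{(i,j)\in E_L\cap\tau(E_R): \{(i,j)\}\in\mathcal E\}$. The model inclusion order is $\mathcal H\preceq_s\mathcal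 G$ iff $\mathcal P(\mathcal H)\subseteq\mathcal P(\mathcal G)$ (iff the edge set of $\mathcal H$ is contained in that of $\mathcal G$ and every vertex, resp. edge, colour class of $\mathcal H$ is a union of vertex, resp. edge, colour classes of $\mathcal G$); $\mathcal H$ is covered by $\mathcal G$ in this order if $\mathcal H\prec_s\mathcal G$ and no $\mathcal F\in\mathcal P$ satisfies $\mathcal H\prec_s\mathcal F\prec_s\mathcal G$; $\wedge_s$ denotes the meet (infimum) in the lattice $\langle\mathcal P,\preceq_s\rangle$. The twin order is $\mathcal H\preceq_t\mathcal G$ iff $E_{\mathcal H}\subseteq E_{\mathcal G}$, $\mathbb L_{\mathcal H}\subseteq\mathbb L_{\mathcal G}$ and $\mathbb E_{\mathcal H}\subseteq\mathbb E_{\mathcal G}$; $\langle\mathcal P,\preceq_t\rangle$ is a lattice whose meet is $\mathcal G\wedge_t\mathcal H=(V,E_{\mathcal G}\cap E_{\mathcal H},\mathbb L_{\mathcal G}\cap\mathbb L_{\mathcal H},\mathbb E_{\mathcal G}\cap\mathbb E_{\mathcal H})$. Two neighbouring submodels $\mathcal H_1,\mathcal H_2$ of $\mathcal G$ satisfy $\mathcal H_1\preceq_t\mathcal H_2$ iff, for some $(i,j)\in\mathbb E_{\mathcal G}$, $\mathcal H_2=(V,E_{\mathcal G},\mathbb L_{\mathcal G},\mathbb E_{\mathcal G}\setminus\{(i,j)\})$ and $\mathcal H_1$ is one of the two graphs named in the claim; otherwise they are $\preceq_t$-incomparable. *)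

theory Defs
  imports "HOL-Library.Disjoint_Sets"
begin

(* Vertices are 1..p (naturals), edges are pairs (i,j) with i<j. *)

type_synonym vertex = nat
type_synonym edge = "nat \<times> nat"

(* A coloured graph: (vertex colour classes, edge colour classes). *)
type_synonym cgraph = "vertex set set \<times> edge set set"

definition Vset :: "nat \<Rightarrow> nat set" where
  "Vset p = {1..p}"

definition twin_pairing :: "nat \<Rightarrow> (nat \<Rightarrow> nat) \<Rightarrow> bool" where
  "twin_pairing p \<tau> \<longleftrightarrow>
     (\<forall>i\<in>Vset p. \<tau> i \<in> Vset p \<and> \<tau> (\<tau> i) = i \<and> \<tau> i \<noteq> i)"

definition tau_e :: "(nat \<Rightarrow> nat) \<Rightarrow> edge \<Rightarrow> edge" where
  "tau_e \<tau> e = (min (\<tau> (fst e)) (\<tau> (snd e)), max (\<tau> (fst e)) (\<tau> (snd e)))"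

definition FV :: "nat \<Rightarrow> edge set" where
  "FV p = {(i,j). i \<in> Vset p \<and> j \<in> Vset p \<and> i < j}"

definition FL :: "nat \<Rightarrow> (nat \<Rightarrow> nat) \<Rightarrow> edge set" where
  "FL p \<tau> = {(i,j) \<in> FV p. i < \<tau> j}"

definition FR :: "nat \<Rightarrow> (nat \<Rightarrow> nat) \<Rightarrow> edge set" where
  "FR p \<tau> = {(i,j) \<in> FV p. i > \<tau> j}"

definition vclasses :: "cgraph \<Rightarrow> vertex set set" where
  "vclasses G = fst G"

definition eclasses :: "cgraph \<Rightarrow> edge set set" where
  "eclasses G = snd G"

definition edges :: "cgraph \<Rightarrow> edge set" where
  "edges G = \<Union> (eclasses G)"

definition atomic :: "'a set \<Rightarrow> bool" where
  "atomic X \<longleftrightarrow> (\<exists>x. X = {x})"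

definition twin_vclass :: "(nat \<Rightarrow> nat) \<Rightarrow> vertex set \<Rightarrow> bool" where
  "twin_vclass \<tau> X \<longleftrightarrow> (\<exists>i. X = {i, \<tau> i})"

definition twin_eclass :: "(nat \<Rightarrow> nat) \<Rightarrow> edge set \<Rightarrow> bool" where
  "twin_eclass \<tau> X \<longleftrightarrow> (\<exists>e. X = {e, tau_e \<tau> e} \<and> e \<noteq> tau_e \<tau> e)"

definition is_pdCG :: "nat \<Rightarrow> (nat \<Rightarrow> nat) \<Rightarrow> cgraph \<Rightarrow> bool" where
  "is_pdCG p \<tau> G \<longleftrightarrow>
     partition_on (Vset p) (vclasses G) \<and>
     edges G \<subseteq> FV p \<and>
     partition_on (edges G) (eclasses G) \<and>
     (\<forall>X\<in>vclasses G. atomic X \<or> twin_vclass \<tau> X) \<and>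
     (\<forall>X\<in>eclasses G. atomic X \<or> twin_eclass \<tau> X)"

(* quadruplet representation (V is fixed, so we record (E, LL, EE)) *)
definition Lbb :: "nat \<Rightarrow> cgraph \<Rightarrow> vertex set" where
  "Lbb q G = {i \<in> {1..q}. {i} \<in> vclasses G}"

definition Ebb :: "nat \<Rightarrow> (nat \<Rightarrow> nat) \<Rightarrow> cgraph \<Rightarrow> edge set" where
  "Ebb p \<tau> G = {e \<in> (edges G \<inter> FL p \<tau>) \<inter> tau_e \<tau> ` (edges G \<inter> FR p \<tau>). {e} \<in> eclasses G}"

definition quad :: "nat \<Rightarrow> nat \<Rightarrow> (nat \<Rightarrow> nat) \<Rightarrow> cgraph \<Rightarrow> edge set \<times> vertex set \<times> edge set" where
  "quad p q \<tau> G = (edges G, Lbb q G, Ebb p \<tau> G)"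

(* model inclusion order (combinatorial characterisation of P(H) \<subseteq> P(G)) *)
definition sub_s :: "cgraph \<Rightarrow> cgraph \<Rightarrow> bool" where
  "sub_s H G \<longleftrightarrow>
     edges H \<subseteq> edges G \<and>
     (\<forall>X\<in>vclasses H. \<exists>S\<subseteq>vclasses G. X = \<Union>S) \<and>
     (\<forall>X\<in>eclasses H. \<exists>S\<subseteq>eclasses G. X = \<Union>S)"

definition covered_s :: "nat \<Rightarrow> (nat \<Rightarrow> nat) \<Rightarrow> cgraph \<Rightarrow> cgraph \<Rightarrow> bool" where
  "covered_s p \<tau> H G \<longleftrightarrow>
     sub_s H G \<and> H \<noteq> G \<and>
     \<not> (\<exists>F. is_pdCG p \<tau> F \<and> sub_s H F \<and> H \<noteq> F \<and> sub_s F G \<and> F \<noteq> G)"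

definition meet_s :: "nat \<Rightarrow> (nat \<Rightarrow> nat) \<Rightarrow> cgraph \<Rightarrow> cgraph \<Rightarrow> cgraph" where
  "meet_s p \<tau> H1 H2 = (THE M. is_pdCG p \<tau> M \<and> sub_s M H1 \<and> sub_s M H2 \<and>
       (\<forall>F. is_pdCG p \<tau> F \<and> sub_s F H1 \<and> sub_s F H2 \<longrightarrow> sub_s F M))"

definition sub_t :: "nat \<Rightarrow> nat \<Rightarrow> (nat \<Rightarrow> nat) \<Rightarrow> cgraph \<Rightarrow> cgraph \<Rightarrow> bool" where
  "sub_t p q \<tau> H G \<longleftrightarrow>
     edges H \<subseteq> edges G \<and> Lbb q H \<subseteq> Lbb q G \<and> Ebb p \<tau> H \<subseteq> Ebb p \<tau> G"

definition qmeet :: "edge set \<times> vertex set \<times> edge set \<Rightarrow> edge set \<times> vertex set \<times> edge set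
                     \<Rightarrow> edge set \<times> vertex set \<times> edge set" where
  "qmeet A B = (fst A \<inter> fst B, fst (snd A) \<inter> fst (snd B), snd (snd A) \<inter> snd (snd B))"

definition meet_t :: "nat \<Rightarrow> nat \<Rightarrow> (nat \<Rightarrow> nat) \<Rightarrow> cgraph \<Rightarrow> cgraph \<Rightarrow> edge set \<times> vertex set \<times> edge set" where
  "meet_t p q \<tau> G H = qmeet (quad p q \<tau> G) (quad p q \<tau> H)"

end

theory Submission
  imports Defs
begin

(*
  A pdCG is determined by its quadruplet (E, Lbb, Ebb), and H is a submodel of G iff the three
  components grow and every edge of H whose twin is an edge of G but not of H is atomic in G.
  This makes the meet of any two pdCGs explicit (meet_quad).  A graph covered by G in which an
  edge r of Ebb G is no longer atomic is G with r merged with its twin, minus those of r, tau r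
  that it lacks.  If they are
  twin-incomparable, the meet drops no common edge: an edge of both whose twin lies in H1 only
  is atomic in H1, since otherwise H1 would be G with that pair merged, which is twin-above H2.
  If H1 is twin-below H2, then H2 is G with some r of Ebb G merged, H1 lacks in addition one of
  r, tau r, and the meet lacks both.
*)

section \<open>Partitions given by a class map\<close>

definition class_map :: "'a set \<Rightarrow> ('a \<Rightarrow> 'a set) \<Rightarrow> bool" where
  "class_map A c \<longleftrightarrow> (\<forall>x\<in>A. x \<in> c x \<and> c x \<subseteq> A \<and> (\<forall>y\<in>c x. c y = c x))"

lemma class_mapD:
  assumes "class_map A c" "x \<in> A"
  shows class_map_self: "x \<in> c x" and class_map_subset: "c x \<subseteq> A"
    and class_map_eq: "y \<in> c x \<Longrightarrow> c y = c x"
  using assms unfolding class_map_def by blast+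

lemma partition_on_class_map:
  assumes "class_map A c"
  shows "partition_on A (c ` A)"
proof (rule partition_onI)
  show "\<Union> (c ` A) = A"
    using class_map_self[OF assms] class_map_subset[OF assms] by blast
  show "{} \<notin> c ` A"
    using class_map_self[OF assms] by blast
  fix X Y assume "X \<in> c ` A" "Y \<in> c ` A" "X \<noteq> Y"
  then show "disjnt X Y"
    using class_map_eq[OF assms] unfolding disjnt_def by blast
qed

lemma singleton_in_class_image_iff:
  assumes "class_map A c"
  shows "{x} \<in> c ` A \<longleftrightarrow> x \<in> A \<and> c x = {x}"
proof
  assume "{x} \<in> c ` A"
  then obtain y where "y \<in> A" "c y = {x}" by blast
  then show "x \<in> A \<and> c x = {x}"
    using class_map_eq[OF assms] class_map_subset[OF assms] by blast
qed blast

lemma partition_on_unique_class: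
  assumes "partition_on A P" "X \<in> P" "Y \<in> P" "x \<in> X" "x \<in> Y"
  shows "X = Y"
  using assms unfolding partition_on_def disjoint_def disjnt_def by blast

lemma partition_on_eq_class_image:
  assumes P: "partition_on A P" and classes: "\<And>X x. X \<in> P \<Longrightarrow> x \<in> X \<Longrightarrow> c x = X"
  shows "P = c ` A"
proof
  have A: "A = \<Union>P"
    using P by (rule partition_onD1)
  show "P \<subseteq> c ` A"
  proof
    fix X assume "X \<in> P"
    moreover obtain x where "x \<in> X"
      using \<open>X \<in> P\<close> P partition_onD3 by fastforce
    ultimately have "x \<in> A" "X = c x"
      using A classes by auto
    then show "X \<in> c ` A" by blast
  qed
  show "c ` A \<subseteq> P"
  proof
    fix Y assume "Y \<in> c ` A"
    then obtain x X where "Y = c x" "X \<in> P" "x \<in> X"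
      using A by blast
    then show "Y \<in> P"
      using classes by simp
  qed
qed

lemma unions_of_classes_iff:
  assumes c: "class_map A c" and d: "class_map B d" and "A \<subseteq> B"
  shows "(\<forall>X\<in>c ` A. \<exists>S\<subseteq>d ` B. X = \<Union>S) \<longleftrightarrow> (\<forall>x\<in>A. d x \<subseteq> c x)"
proof
  assume unions: "\<forall>X\<in>c ` A. \<exists>S\<subseteq>d ` B. X = \<Union>S"
  show "\<forall>x\<in>A. d x \<subseteq> c x"
  proof
    fix x assume "x \<in> A"
    then obtain S where "S \<subseteq> d ` B" "c x = \<Union>S"
      using bspec[OF unions, of "c x"] by blast
    moreover have "x \<in> c x"
      using class_map_self[OF c \<open>x \<in> A\<close>] .
    ultimately obtain Y where "Y \<in> S" "x \<in> Y" "Y \<subseteq> c x"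
      by auto
    then obtain y where "y \<in> B" "x \<in> d y" "d y \<subseteq> c x"
      using \<open>S \<subseteq> d ` B\<close> by auto
    then show "d x \<subseteq> c x"
      using class_map_eq[OF d \<open>y \<in> B\<close> \<open>x \<in> d y\<close>] by simp
  qed
next
  assume sub: "\<forall>x\<in>A. d x \<subseteq> c x"
  show "\<forall>X\<in>c ` A. \<exists>S\<subseteq>d ` B. X = \<Union>S"
  proof
    fix X assume "X \<in> c ` A"
    then obtain x where x: "x \<in> A" "X = c x" by blast
    have XA: "X \<subseteq> A"
      using class_map_subset[OF c x(1)] x(2) by simp
    have "y \<in> d y" if "y \<in> X" for y
      using class_map_self[OF d] XA \<open>A \<subseteq> B\<close> that by blast
    then have "X \<subseteq> \<Union> (d ` X)"
      by blast
    moreover have "d y \<subseteq> X" if "y \<in> X" for y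
    proof -
      have "c y = X"
        using class_map_eq[OF c x(1)] that x(2) by simp
      then show ?thesis
        using sub XA that by blast
    qed
    moreover have "d ` X \<subseteq> d ` B"
      using XA \<open>A \<subseteq> B\<close> by blast
    ultimately show "\<exists>S\<subseteq>d ` B. X = \<Union>S"
      by (intro exI[of _ "d ` X"]) auto
  qed
qed

lemma singleton_class_partner:
  assumes P: "partition_on A P"
    and shape: "\<And>X x. X \<in> P \<Longrightarrow> x \<in> X \<Longrightarrow> X = {x} \<or> X = {x, f x}"
    and "{x} \<in> P" "f x \<in> A" "f (f x) = x" "f x \<noteq> x"
  shows "{f x} \<in> P"
proof -
  obtain Y where Y: "Y \<in> P" "f x \<in> Y"
    using P \<open>f x \<in> A\<close> partition_onD1 by blast
  have "Y \<noteq> {f x, x}"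
    using partition_on_unique_class[OF P Y(1) \<open>{x} \<in> P\<close>, of x] \<open>f x \<noteq> x\<close> by auto
  then show ?thesis
    using shape[OF Y] Y(1) \<open>f (f x) = x\<close> by auto
qed

section \<open>Twins of vertices and edges\<close>

locale paired_data =
  fixes p q :: nat and \<tau> :: "nat \<Rightarrow> nat"
  assumes twin_pairing: "twin_pairing p \<tau>" and q_le_p: "q \<le> p"
    and tau_left: "\<tau> ` {1..q} = {q+1..p}"
begin

abbreviation V :: "vertex set" where "V \<equiv> Vset p"

abbreviation twin :: "edge \<Rightarrow> edge" where "twin \<equiv> tau_e \<tau>"

lemma tau_in_V: "i \<in> V \<Longrightarrow> \<tau> i \<in> V"
  and tau_tau: "i \<in> V \<Longrightarrow> \<tau> (\<tau> i) = i"
  and tau_neq: "i \<in> V \<Longrightarrow> \<tau> i \<noteq> i"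
  using twin_pairing unfolding twin_pairing_def by blast+

lemma le_q_iff_tau_gt_q:
  assumes "i \<in> V"
  shows "i \<le> q \<longleftrightarrow> q < \<tau> i"
proof
  assume "i \<le> q"
  then have "\<tau> i \<in> {q+1..p}"
    using assms tau_left by (auto simp: Vset_def)
  then show "q < \<tau> i" by simp
next
  assume "q < \<tau> i"
  show "i \<le> q"
  proof (rule ccontr)
    assume "\<not> i \<le> q"
    then have "i \<in> \<tau> ` {1..q}"
      using assms tau_left by (auto simp: Vset_def)
    then obtain k where "k \<in> {1..q}" "i = \<tau> k" by blast
    moreover have "k \<in> V"
      using \<open>k \<in> {1..q}\<close> q_le_p by (auto simp: Vset_def)
    ultimately show False
      using \<open>q < \<tau> i\<close> tau_tau by auto
  qed
qed

lemma twin_Pair: "twin (i, j) = (min (\<tau> i) (\<tau> j), max (\<tau> i) (\<tau> j))"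
  by (simp add: tau_e_def)

lemma FV_iff: "(i, j) \<in> FV p \<longleftrightarrow> i \<in> V \<and> j \<in> V \<and> i < j"
  by (simp add: FV_def)

lemma FL_FV: "e \<in> FL p \<tau> \<Longrightarrow> e \<in> FV p"
  by (auto simp: FL_def)

lemma twin_in_FV:
  assumes "e \<in> FV p"
  shows "twin e \<in> FV p"
proof -
  obtain i j where e: "e = (i, j)" "i \<in> V" "j \<in> V" "i < j"
    using assms by (cases e) (auto simp: FV_iff)
  then have "\<tau> i \<noteq> \<tau> j"
    using tau_tau by (metis less_irrefl)
  then show ?thesis
    using e tau_in_V by (auto simp: twin_Pair FV_iff min_def max_def)
qed

lemma twin_twin:
  assumes "e \<in> FV p"
  shows "twin (twin e) = e"
proof -
  obtain i j where e: "e = (i, j)" "i \<in> V" "j \<in> V" "i < j"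
    using assms by (cases e) (auto simp: FV_iff)
  then show ?thesis
    using tau_tau by (cases "\<tau> i < \<tau> j") (auto simp: twin_Pair min_def max_def)
qed

lemma twin_in_FR_iff:
  assumes "e \<in> FV p"
  shows "twin e \<in> FR p \<tau> \<longleftrightarrow> e \<in> FL p \<tau>"
proof -
  obtain i j where e: "e = (i, j)" "i \<in> V" "j \<in> V" "i < j"
    using assms by (cases e) (auto simp: FV_iff)
  have side: "i \<le> q \<longleftrightarrow> q < \<tau> i" "j \<le> q \<longleftrightarrow> q < \<tau> j"
    using le_q_iff_tau_gt_q e by auto
  have "twin e \<in> FV p"
    using twin_in_FV assms .
  then show ?thesis
    using e side tau_tau[of i] tau_tau[of j]
    by (cases "\<tau> i < \<tau> j") (auto simp: twin_Pair FL_def FR_def FV_iff min_def max_def)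
qed

lemma FL_FR_disjoint: "e \<in> FL p \<tau> \<Longrightarrow> e \<notin> FR p \<tau>"
  by (auto simp: FL_def FR_def)

lemma twin_FL_notin_FL:
  assumes "e \<in> FL p \<tau>"
  shows "twin e \<notin> FL p \<tau>"
  using assms twin_in_FR_iff FL_FV FL_FR_disjoint by blast

lemma twin_fixed_if_notin_FL_FR:
  assumes "e \<in> FV p" "e \<notin> FL p \<tau>" "e \<notin> FR p \<tau>"
  shows "twin e = e"
proof -
  obtain i j where e: "e = (i, j)" "i \<in> V" "j \<in> V" "i < j"
    using assms by (cases e) (auto simp: FV_iff)
  then have "i = \<tau> j"
    using assms by (auto simp: FL_def FR_def)
  then show ?thesis
    using e tau_tau by (auto simp: twin_Pair)
qed

lemma twin_doubleton_eq:
  assumes "e \<in> FV p" "r \<in> {e, twin e}"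
  shows "{r, twin r} = {e, twin e}"
  using assms twin_twin[OF assms(1)] by auto

section \<open>Quadruplet representation of pdCGs\<close>

type_synonym quadruplet = "edge set \<times> vertex set \<times> edge set"

definition vclass :: "vertex set \<Rightarrow> vertex \<Rightarrow> vertex set" where
  "vclass L i = (if i \<in> L \<or> \<tau> i \<in> L then {i} else {i, \<tau> i})"

definition paired :: "edge set \<Rightarrow> edge set \<Rightarrow> edge \<Rightarrow> bool" where
  "paired E B e \<longleftrightarrow> twin e \<in> E \<and> twin e \<noteq> e \<and> e \<notin> B \<and> twin e \<notin> B"

definition eclass :: "edge set \<Rightarrow> edge set \<Rightarrow> edge \<Rightarrow> edge set" where
  "eclass E B e = (if paired E B e then {e, twin e} else {e})"

fun admissible :: "quadruplet \<Rightarrow> bool" where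
  "admissible (E, L, B) \<longleftrightarrow> E \<subseteq> FV p \<and> L \<subseteq> {1..q} \<and> B \<subseteq> E \<inter> FL p \<tau> \<and> twin ` B \<subseteq> E"

fun graph_of :: "quadruplet \<Rightarrow> cgraph" where
  "graph_of (E, L, B) = (vclass L ` V, eclass E B ` E)"

declare graph_of.simps [simp del]

lemma class_map_vclass: "class_map V (vclass L)"
  unfolding class_map_def
proof (intro ballI conjI)
  fix i assume i: "i \<in> V"
  show "i \<in> vclass L i"
    by (simp add: vclass_def)
  show "vclass L i \<subseteq> V"
    using tau_in_V[OF i] i by (simp add: vclass_def)
  fix j assume j: "j \<in> vclass L i"
  show "vclass L j = vclass L i"
  proof (cases "i \<in> L \<or> \<tau> i \<in> L")
    case True
    then show ?thesis
      using j by (simp add: vclass_def)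
  next
    case False
    then have "j = i \<or> j = \<tau> i"
      using j by (simp add: vclass_def)
    moreover have "vclass L (\<tau> i) = vclass L i"
      using False tau_tau[OF i] by (auto simp: vclass_def)
    ultimately show ?thesis by auto
  qed
qed

lemma class_map_eclass:
  assumes "E \<subseteq> FV p"
  shows "class_map E (eclass E B)"
  unfolding class_map_def
proof (intro ballI conjI)
  fix e assume e: "e \<in> E"
  show "e \<in> eclass E B e"
    by (simp add: eclass_def)
  show "eclass E B e \<subseteq> E"
    using e by (simp add: eclass_def paired_def)
  fix f assume f: "f \<in> eclass E B e"
  show "eclass E B f = eclass E B e"
  proof (cases "paired E B e")
    case True
    have "twin (twin e) = e"
      using twin_twin assms e by blast
    then have "eclass E B (twin e) = eclass E B e"
      using True e by (auto simp: eclass_def paired_def)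
    moreover have "f = e \<or> f = twin e"
      using True f by (simp add: eclass_def)
    ultimately show ?thesis by auto
  next
    case False
    then show ?thesis
      using f by (simp add: eclass_def)
  qed
qed

lemma vclasses_graph_of [simp]: "vclasses (graph_of (E, L, B)) = vclass L ` V"
  and eclasses_graph_of [simp]: "eclasses (graph_of (E, L, B)) = eclass E B ` E"
  by (simp_all add: vclasses_def eclasses_def graph_of.simps)

lemma edges_graph_of [simp]: "edges (graph_of (E, L, B)) = E"
  by (auto simp: edges_def eclass_def paired_def)

lemma eclass_eq_singleton_iff: "eclass E B e = {e} \<longleftrightarrow> \<not> paired E B e"
  by (auto simp: eclass_def paired_def)

lemma pdCG_graph_of:
  assumes "admissible Q"
  shows "is_pdCG p \<tau> (graph_of Q)"
proof -
  obtain E L B where Q: "Q = (E, L, B)" by (cases Q)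
  have "E \<subseteq> FV p"
    using assms Q by simp
  moreover have "atomic X \<or> twin_vclass \<tau> X" if "X \<in> vclass L ` V" for X
    using that unfolding vclass_def atomic_def twin_vclass_def by auto
  moreover have "atomic X \<or> twin_eclass \<tau> X" if X: "X \<in> eclass E B ` E" for X
  proof -
    obtain e where "X = eclass E B e"
      using X by blast
    then show ?thesis
      unfolding eclass_def paired_def atomic_def twin_eclass_def by (metis (lifting))
  qed
  ultimately show ?thesis
    unfolding is_pdCG_def Q
    using partition_on_class_map[OF class_map_vclass] partition_on_class_map[OF class_map_eclass]
    by auto
qed

lemma Ebb_eq:
  assumes "edges G \<subseteq> FV p"
  shows "Ebb p \<tau> G = {e \<in> edges G \<inter> FL p \<tau>. twin e \<in> edges G \<and> {e} \<in> eclasses G}"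
proof -
  have "e \<in> twin ` (edges G \<inter> FR p \<tau>) \<longleftrightarrow> twin e \<in> edges G"
    if "e \<in> edges G \<inter> FL p \<tau>" for e
  proof
    assume "e \<in> twin ` (edges G \<inter> FR p \<tau>)"
    then show "twin e \<in> edges G"
      using assms twin_twin by auto
  next
    assume "twin e \<in> edges G"
    moreover have "e \<in> FV p"
      using that assms by blast
    then have "twin e \<in> FR p \<tau>" "twin (twin e) = e"
      using that twin_in_FR_iff twin_twin by auto
    ultimately show "e \<in> twin ` (edges G \<inter> FR p \<tau>)"
      by (metis IntI image_eqI)
  qed
  then show ?thesis
    unfolding Ebb_def by blast
qed

lemma Lbb_graph_of:
  assumes "L \<subseteq> {1..q}"
  shows "Lbb q (graph_of (E, L, B)) = L"
proof -
  have "{i} \<in> vclass L ` V \<longleftrightarrow> i \<in> L" if "i \<in> {1..q}" for i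
  proof -
    have "i \<in> V"
      using that q_le_p by (auto simp: Vset_def)
    then have "q < \<tau> i"
      using that le_q_iff_tau_gt_q by simp
    then have "\<tau> i \<notin> L" "\<tau> i \<noteq> i"
      using assms tau_neq[OF \<open>i \<in> V\<close>] by auto
    then show ?thesis
      using singleton_in_class_image_iff[OF class_map_vclass] \<open>i \<in> V\<close>
      by (auto simp: vclass_def)
  qed
  then show ?thesis
    using assms unfolding Lbb_def by auto
qed

lemma Ebb_graph_of:
  assumes "admissible (E, L, B)"
  shows "Ebb p \<tau> (graph_of (E, L, B)) = B"
proof -
  have EF: "E \<subseteq> FV p"
    using assms by simp
  have "{e} \<in> eclass E B ` E \<longleftrightarrow> e \<in> E \<and> \<not> paired E B e" for e
    using singleton_in_class_image_iff[OF class_map_eclass[OF EF]] eclass_eq_singleton_iff by simp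
  moreover have "twin e \<noteq> e" "twin e \<notin> B" if "e \<in> FL p \<tau>" for e
    using twin_FL_notin_FL[OF that] that assms by auto
  ultimately show ?thesis
    using assms EF by (auto simp: Ebb_eq paired_def)
qed

lemma quad_graph_of:
  assumes "admissible Q"
  shows "quad p q \<tau> (graph_of Q) = Q"
  using assms Lbb_graph_of Ebb_graph_of by (cases Q) (simp add: quad_def)

lemma admissible_quad:
  assumes "is_pdCG p \<tau> G"
  shows "admissible (quad p q \<tau> G)"
proof -
  have EF: "edges G \<subseteq> FV p"
    using assms by (simp add: is_pdCG_def)
  then show ?thesis
    by (auto simp: quad_def Lbb_def Ebb_eq)
qed

lemma vclass_shape:
  assumes G: "is_pdCG p \<tau> G" and X: "X \<in> vclasses G" "i \<in> X"
  shows "X = {i} \<or> X = {i, \<tau> i}"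
proof -
  have "X \<subseteq> V"
    using G X partition_onD1 by (fastforce simp: is_pdCG_def)
  have "atomic X \<or> twin_vclass \<tau> X"
    using G X by (simp add: is_pdCG_def)
  then show ?thesis
  proof
    assume "twin_vclass \<tau> X"
    then obtain j where "X = {j, \<tau> j}"
      unfolding twin_vclass_def by blast
    moreover have "j \<in> V"
      using \<open>X \<subseteq> V\<close> calculation by blast
    ultimately show ?thesis
      using X(2) tau_tau by auto
  qed (use X(2) in \<open>auto simp: atomic_def\<close>)
qed

lemma eclass_shape:
  assumes G: "is_pdCG p \<tau> G" and X: "X \<in> eclasses G" "e \<in> X"
  shows "X = {e} \<or> X = {e, twin e}"
proof -
  have "X \<subseteq> FV p"
    using G X partition_onD1 by (fastforce simp: is_pdCG_def)
  have "atomic X \<or> twin_eclass \<tau> X"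
    using G X by (simp add: is_pdCG_def)
  then show ?thesis
  proof
    assume "twin_eclass \<tau> X"
    then obtain f where "X = {f, twin f}"
      unfolding twin_eclass_def by blast
    moreover have "f \<in> FV p"
      using \<open>X \<subseteq> FV p\<close> calculation by blast
    ultimately show ?thesis
      using X(2) twin_twin[of f] by auto
  qed (use X(2) in \<open>auto simp: atomic_def\<close>)
qed

lemma singleton_vclass_Lbb:
  assumes G: "is_pdCG p \<tau> G" and "{i} \<in> vclasses G"
  shows "i \<in> Lbb q G \<or> \<tau> i \<in> Lbb q G"
proof -
  have P: "partition_on V (vclasses G)"
    using G by (simp add: is_pdCG_def)
  then have i: "i \<in> V"
    using \<open>{i} \<in> vclasses G\<close> partition_onD1 by fastforce
  show ?thesis
  proof (cases "i \<le> q")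
    case True
    then show ?thesis
      using i \<open>{i} \<in> vclasses G\<close> by (auto simp: Lbb_def Vset_def)
  next
    case False
    have "\<tau> i \<le> q" "\<tau> i \<in> V"
      using False le_q_iff_tau_gt_q[OF tau_in_V[OF i]] tau_tau[OF i] tau_in_V[OF i] by auto
    moreover have "{\<tau> i} \<in> vclasses G"
      using singleton_class_partner[OF P vclass_shape[OF G] \<open>{i} \<in> vclasses G\<close>
          tau_in_V[OF i] tau_tau[OF i] tau_neq[OF i]] .
    ultimately show ?thesis
      by (auto simp: Lbb_def Vset_def)
  qed
qed

lemma vclass_Lbb:
  assumes G: "is_pdCG p \<tau> G" and X: "X \<in> vclasses G" "i \<in> X"
  shows "vclass (Lbb q G) i = X"
proof (cases "X = {i}")
  case True
  then show ?thesis
    using singleton_vclass_Lbb[OF G] X(1) by (simp add: vclass_def)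
next
  case False
  have P: "partition_on V (vclasses G)"
    using G by (simp add: is_pdCG_def)
  have "X = {i, \<tau> i}" "\<tau> i \<noteq> i"
    using vclass_shape[OF G X] False by auto
  then have "{i} \<notin> vclasses G" "{\<tau> i} \<notin> vclasses G"
    using partition_on_unique_class[OF P X(1), of "{i}" i]
      partition_on_unique_class[OF P X(1), of "{\<tau> i}" "\<tau> i"] by auto
  then show ?thesis
    using \<open>X = {i, \<tau> i}\<close> by (simp add: vclass_def Lbb_def)
qed

lemma singleton_eclass_Ebb:
  assumes G: "is_pdCG p \<tau> G" and "{e} \<in> eclasses G" "twin e \<in> edges G" "twin e \<noteq> e"
  shows "e \<in> Ebb p \<tau> G \<or> twin e \<in> Ebb p \<tau> G"
proof -
  have P: "partition_on (edges G) (eclasses G)" and EF: "edges G \<subseteq> FV p"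
    using G by (simp_all add: is_pdCG_def)
  have e: "e \<in> edges G" "e \<in> FV p"
    using P EF \<open>{e} \<in> eclasses G\<close> partition_onD1 by fastforce+
  show ?thesis
  proof (cases "e \<in> FL p \<tau>")
    case True
    then show ?thesis
      using assms e EF by (auto simp: Ebb_eq)
  next
    case False
    then have "e \<in> FR p \<tau>"
      using twin_fixed_if_notin_FL_FR[OF e(2)] assms(4) by blast
    then have "twin e \<in> FL p \<tau>"
      using twin_in_FR_iff[OF twin_in_FV[OF e(2)]] twin_twin[OF e(2)] by simp
    moreover have "{twin e} \<in> eclasses G"
      using singleton_class_partner[OF P eclass_shape[OF G] \<open>{e} \<in> eclasses G\<close>
          assms(3) twin_twin[OF e(2)] assms(4)] .
    ultimately show ?thesis
      using assms(3) e twin_twin[OF e(2)] EF by (auto simp: Ebb_eq)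
  qed
qed

lemma eclass_Ebb:
  assumes G: "is_pdCG p \<tau> G" and X: "X \<in> eclasses G" "e \<in> X"
  shows "eclass (edges G) (Ebb p \<tau> G) e = X"
proof (cases "X = {e}")
  case True
  then show ?thesis
    using singleton_eclass_Ebb[OF G, of e] X(1) by (auto simp: eclass_def paired_def)
next
  case False
  have P: "partition_on (edges G) (eclasses G)" and EF: "edges G \<subseteq> FV p"
    using G by (simp_all add: is_pdCG_def)
  have "X = {e, twin e}" "twin e \<noteq> e"
    using eclass_shape[OF G X] False by auto
  moreover have "twin e \<in> edges G"
    using calculation(1) P X(1) partition_onD1 by fastforce
  moreover have "{e} \<notin> eclasses G" "{twin e} \<notin> eclasses G"
    using partition_on_unique_class[OF P X(1), of "{e}" e]
      partition_on_unique_class[OF P X(1), of "{twin e}" "twin e"] calculation(1,2) by auto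
  ultimately show ?thesis
    using EF by (simp add: eclass_def paired_def Ebb_eq)
qed

lemma graph_of_quad:
  assumes G: "is_pdCG p \<tau> G"
  shows "graph_of (quad p q \<tau> G) = G"
proof -
  have "vclasses G = vclass (Lbb q G) ` V"
    using G vclass_Lbb by (intro partition_on_eq_class_image) (simp_all add: is_pdCG_def)
  moreover have "eclasses G = eclass (edges G) (Ebb p \<tau> G) ` edges G"
    using G eclass_Ebb by (intro partition_on_eq_class_image) (simp_all add: is_pdCG_def)
  ultimately show ?thesis
    unfolding quad_def graph_of.simps vclasses_def eclasses_def by (metis prod.collapse)
qed

lemma quad_inject:
  assumes "is_pdCG p \<tau> G" "is_pdCG p \<tau> H"
  shows "quad p q \<tau> G = quad p q \<tau> H \<longleftrightarrow> G = H"
  using graph_of_quad[OF assms(1)] graph_of_quad[OF assms(2)] by metis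

section \<open>Model inclusion and meets in quadruplet form\<close>

(* An edge of the smaller graph whose twin it lacks is atomic there, so its class in the larger
   graph must be atomic too. *)
fun quad_le :: "quadruplet \<Rightarrow> quadruplet \<Rightarrow> bool" where
  "quad_le (E1, L1, B1) (E2, L2, B2) \<longleftrightarrow> E1 \<subseteq> E2 \<and> L1 \<subseteq> L2 \<and> B1 \<subseteq> B2 \<and>
     (\<forall>e\<in>E1. twin e \<notin> E1 \<longrightarrow> twin e \<in> E2 \<longrightarrow> e \<in> B2 \<or> twin e \<in> B2)"

lemma quad_le_antisym: "quad_le Q1 Q2 \<Longrightarrow> quad_le Q2 Q1 \<Longrightarrow> Q1 = Q2"
  by (cases Q1; cases Q2) auto

lemma vclass_subset_iff:
  assumes "L1 \<subseteq> {1..q}" "L2 \<subseteq> {1..q}"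
  shows "(\<forall>i\<in>V. vclass L2 i \<subseteq> vclass L1 i) \<longleftrightarrow> L1 \<subseteq> L2"
proof
  assume sub: "\<forall>i\<in>V. vclass L2 i \<subseteq> vclass L1 i"
  show "L1 \<subseteq> L2"
  proof
    fix i assume "i \<in> L1"
    then have i: "i \<in> V" "i \<le> q"
      using assms(1) q_le_p by (auto simp: Vset_def)
    then have "\<tau> i \<notin> L2"
      using assms(2) le_q_iff_tau_gt_q by auto
    moreover have "vclass L2 i \<subseteq> {i}"
      using sub i \<open>i \<in> L1\<close> by (auto simp: vclass_def)
    ultimately show "i \<in> L2"
      using tau_neq[OF i(1)] by (auto simp: vclass_def split: if_splits)
  qed
qed (auto simp: vclass_def)

lemma eclass_subset_iff:
  "eclass E2 B2 e \<subseteq> eclass E1 B1 e \<longleftrightarrow> (paired E2 B2 e \<longrightarrow> paired E1 B1 e)"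
  by (auto simp: eclass_def paired_def)

lemma paired_mono_iff:
  assumes "admissible (E1, L1, B1)" "admissible (E2, L2, B2)" "E1 \<subseteq> E2"
  shows "(\<forall>e\<in>E1. paired E2 B2 e \<longrightarrow> paired E1 B1 e) \<longleftrightarrow>
    B1 \<subseteq> B2 \<and> (\<forall>e\<in>E1. twin e \<notin> E1 \<longrightarrow> twin e \<in> E2 \<longrightarrow> e \<in> B2 \<or> twin e \<in> B2)"
proof
  assume mono: "\<forall>e\<in>E1. paired E2 B2 e \<longrightarrow> paired E1 B1 e"
  have "e \<in> B2" if "e \<in> B1" for e
  proof -
    have "e \<in> E1" "twin e \<in> E1" and eL: "e \<in> FL p \<tau>"
      using assms(1) that by auto
    then have "twin e \<in> E2" "twin e \<noteq> e" "twin e \<notin> B2"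
      using assms(2,3) twin_FL_notin_FL[OF eL] by auto
    then show "e \<in> B2"
      using mono \<open>e \<in> E1\<close> that by (auto simp: paired_def)
  qed
  moreover have "e \<in> B2 \<or> twin e \<in> B2"
    if "e \<in> E1" "twin e \<notin> E1" "twin e \<in> E2" for e
    using mono that by (auto simp: paired_def)
  ultimately show "B1 \<subseteq> B2 \<and> (\<forall>e\<in>E1. twin e \<notin> E1 \<longrightarrow> twin e \<in> E2 \<longrightarrow> e \<in> B2 \<or> twin e \<in> B2)"
    by blast
qed (auto simp: paired_def)

lemma sub_s_graph_of_iff:
  assumes "admissible Q1" "admissible Q2"
  shows "sub_s (graph_of Q1) (graph_of Q2) \<longleftrightarrow> quad_le Q1 Q2"
proof -
  obtain E1 L1 B1 E2 L2 B2 where Q: "Q1 = (E1, L1, B1)" "Q2 = (E2, L2, B2)"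
    by (cases Q1; cases Q2)
  have adm: "admissible (E1, L1, B1)" "admissible (E2, L2, B2)"
    using assms Q by simp_all
  have "(\<forall>X\<in>vclass L1 ` V. \<exists>S\<subseteq>vclass L2 ` V. X = \<Union>S) \<longleftrightarrow> L1 \<subseteq> L2"
    using unions_of_classes_iff[OF class_map_vclass class_map_vclass] vclass_subset_iff adm
    by simp
  moreover have "(\<forall>X\<in>eclass E1 B1 ` E1. \<exists>S\<subseteq>eclass E2 B2 ` E2. X = \<Union>S) \<longleftrightarrow>
      B1 \<subseteq> B2 \<and> (\<forall>e\<in>E1. twin e \<notin> E1 \<longrightarrow> twin e \<in> E2 \<longrightarrow> e \<in> B2 \<or> twin e \<in> B2)"
    if "E1 \<subseteq> E2"
    using unions_of_classes_iff[OF class_map_eclass class_map_eclass that]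
      eclass_subset_iff paired_mono_iff[OF adm that] adm by simp
  ultimately show ?thesis
    unfolding Q sub_s_def by auto
qed

lemma sub_s_iff_quad_le:
  assumes "is_pdCG p \<tau> H" "is_pdCG p \<tau> G"
  shows "sub_s H G \<longleftrightarrow> quad_le (quad p q \<tau> H) (quad p q \<tau> G)"
  using sub_s_graph_of_iff[OF admissible_quad[OF assms(1)] admissible_quad[OF assms(2)]]
  by (simp add: graph_of_quad assms)

lemma sub_s_antisym:
  assumes "is_pdCG p \<tau> H" "is_pdCG p \<tau> G" "sub_s H G" "sub_s G H"
  shows "H = G"
  using assms quad_le_antisym quad_inject sub_s_iff_quad_le by metis

lemma sub_s_broken_pair_atomic:
  assumes "is_pdCG p \<tau> H" "is_pdCG p \<tau> G" "sub_s H G"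
    and e: "e \<in> edges H" "twin e \<notin> edges H" "twin e \<in> edges G"
  obtains r where "r \<in> Ebb p \<tau> G" "r \<in> {e, twin e}" "{r, twin r} = {e, twin e}"
proof -
  have "e \<in> FV p"
    using e(1) assms(1) by (auto simp: is_pdCG_def)
  have "e \<in> Ebb p \<tau> G \<or> twin e \<in> Ebb p \<tau> G"
    using sub_s_iff_quad_le assms e by (auto simp: quad_def)
  then show ?thesis
    using that twin_doubleton_eq[OF \<open>e \<in> FV p\<close>] by blast
qed

lemma meet_s_eqI:
  assumes M: "is_pdCG p \<tau> M" "sub_s M H1" "sub_s M H2"
    and greatest: "\<And>F. is_pdCG p \<tau> F \<Longrightarrow> sub_s F H1 \<Longrightarrow> sub_s F H2 \<Longrightarrow> sub_s F M"
  shows "meet_s p \<tau> H1 H2 = M"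
  unfolding meet_s_def
proof (rule the_equality)
  show "is_pdCG p \<tau> M \<and> sub_s M H1 \<and> sub_s M H2 \<and>
      (\<forall>F. is_pdCG p \<tau> F \<and> sub_s F H1 \<and> sub_s F H2 \<longrightarrow> sub_s F M)"
    using M greatest by blast
next
  fix F assume F: "is_pdCG p \<tau> F \<and> sub_s F H1 \<and> sub_s F H2 \<and>
      (\<forall>F'. is_pdCG p \<tau> F' \<and> sub_s F' H1 \<and> sub_s F' H2 \<longrightarrow> sub_s F' F)"
  then have "sub_s F M" "sub_s M F"
    using M greatest by blast+
  then show "F = M"
    using sub_s_antisym F M(1) by blast
qed

(* A common edge whose twin lies in one graph only is atomic in the meet, which is compatible
   with that graph only if the edge or its twin is already atomic there. *)
fun meet_quad :: "quadruplet \<Rightarrow> quadruplet \<Rightarrow> quadruplet" where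
  "meet_quad (E1, L1, B1) (E2, L2, B2) =
     ({e \<in> E1 \<inter> E2. (twin e \<in> E1 - E2 \<longrightarrow> e \<in> B1 \<or> twin e \<in> B1) \<and>
                    (twin e \<in> E2 - E1 \<longrightarrow> e \<in> B2 \<or> twin e \<in> B2)},
      L1 \<inter> L2, B1 \<inter> B2)"

lemma meet_quad_commute: "meet_quad Q1 Q2 = meet_quad Q2 Q1"
  by (cases Q1; cases Q2) auto

lemma admissible_meet_quad:
  assumes "admissible Q1" "admissible Q2"
  shows "admissible (meet_quad Q1 Q2)"
proof -
  obtain E1 L1 B1 E2 L2 B2 where Q: "Q1 = (E1, L1, B1)" "Q2 = (E2, L2, B2)"
    by (cases Q1; cases Q2)
  have "\<forall>e\<in>E1. twin (twin e) = e"
    using assms Q twin_twin by auto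
  then show ?thesis
    using assms unfolding Q by auto
qed

lemma quad_le_meet_quad:
  assumes "admissible Q1" "admissible Q2"
  shows "quad_le (meet_quad Q1 Q2) Q1"
proof -
  obtain E1 L1 B1 E2 L2 B2 where Q: "Q1 = (E1, L1, B1)" "Q2 = (E2, L2, B2)"
    by (cases Q1; cases Q2)
  have "\<forall>e\<in>E1. twin (twin e) = e"
    using assms Q twin_twin by auto
  then show ?thesis
    unfolding Q by auto
qed

lemma meet_quad_greatest:
  assumes "admissible Q1" "admissible Q2" "quad_le F Q1" "quad_le F Q2"
  shows "quad_le F (meet_quad Q1 Q2)"
proof -
  obtain E1 L1 B1 E2 L2 B2 EF LF BF
    where Q: "Q1 = (E1, L1, B1)" "Q2 = (E2, L2, B2)" "F = (EF, LF, BF)"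
    by (cases Q1; cases Q2; cases F)
  have le1: "EF \<subseteq> E1" "LF \<subseteq> L1" "BF \<subseteq> B1"
      "\<forall>e\<in>EF. twin e \<notin> EF \<longrightarrow> twin e \<in> E1 \<longrightarrow> e \<in> B1 \<or> twin e \<in> B1"
    using assms(3) Q by simp_all
  have le2: "EF \<subseteq> E2" "LF \<subseteq> L2" "BF \<subseteq> B2"
      "\<forall>e\<in>EF. twin e \<notin> EF \<longrightarrow> twin e \<in> E2 \<longrightarrow> e \<in> B2 \<or> twin e \<in> B2"
    using assms(4) Q by simp_all
  have "B1 \<subseteq> FL p \<tau>" "B2 \<subseteq> FL p \<tau>"
    using assms(1,2) Q by auto
  then have "\<forall>e\<in>EF. \<not> (e \<in> B1 \<and> twin e \<in> B2) \<and> \<not> (twin e \<in> B1 \<and> e \<in> B2)"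
    using twin_FL_notin_FL by blast
  then show ?thesis
    unfolding Q meet_quad.simps quad_le.simps using le1 le2 by blast
qed

lemma quad_meet_s:
  assumes H1: "is_pdCG p \<tau> H1" and H2: "is_pdCG p \<tau> H2"
  shows "quad p q \<tau> (meet_s p \<tau> H1 H2) = meet_quad (quad p q \<tau> H1) (quad p q \<tau> H2)"
proof -
  let ?Q1 = "quad p q \<tau> H1" and ?Q2 = "quad p q \<tau> H2"
  let ?M = "meet_quad ?Q1 ?Q2"
  have adm: "admissible ?Q1" "admissible ?Q2"
    using admissible_quad H1 H2 by blast+
  have M: "admissible ?M" "is_pdCG p \<tau> (graph_of ?M)" "quad p q \<tau> (graph_of ?M) = ?M"
    using admissible_meet_quad[OF adm] pdCG_graph_of quad_graph_of by blast+
  have "meet_s p \<tau> H1 H2 = graph_of ?M"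
  proof (rule meet_s_eqI)
    show "sub_s (graph_of ?M) H1"
      using quad_le_meet_quad[OF adm] M H1 sub_s_iff_quad_le by simp
    show "sub_s (graph_of ?M) H2"
      using quad_le_meet_quad[OF adm(2,1)] M H2 sub_s_iff_quad_le by (simp add: meet_quad_commute)
    show "sub_s F (graph_of ?M)" if "is_pdCG p \<tau> F" "sub_s F H1" "sub_s F H2" for F
      using meet_quad_greatest[OF adm] that M H1 H2 sub_s_iff_quad_le by simp
  qed (use M in simp)
  then show ?thesis
    using M by simp
qed

section \<open>Covers and neighbouring submodels\<close>

lemma admissible_drop_atomic:
  assumes adm: "admissible (E, L, B)" and "r \<in> B" "X \<subseteq> {r, twin r}"
  shows "admissible (E - X, L, B - {r})"
proof -
  have r: "r \<in> FV p" "r \<in> FL p \<tau>"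
    using adm \<open>r \<in> B\<close> by auto
  note r = r twin_FL_notin_FL[OF r(2)]
  have "b \<notin> X" "twin b \<in> E - X" if "b \<in> B - {r}" for b
  proof -
    have b: "b \<in> FV p" "b \<in> FL p \<tau>" "twin b \<in> E"
      using adm that by auto
    show "b \<notin> X"
      using that b(2) r(3) \<open>X \<subseteq> {r, twin r}\<close> by auto
    have "b \<noteq> r"
      using that by blast
    then have "twin b \<noteq> r" "twin b \<noteq> twin r"
      using b(2) r(3) twin_twin[OF b(1)] twin_twin[OF r(1)] by metis+
    then show "twin b \<in> E - X"
      using b(3) \<open>X \<subseteq> {r, twin r}\<close> by auto
  qed
  then show ?thesis
    using adm by auto
qed

lemma drop_atomic_quad_le:
  assumes adm: "admissible (E, L, B)" and "r \<in> B" "X \<subseteq> {r, twin r}"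
  shows "quad_le (E - X, L, B - {r}) (E, L, B)"
proof -
  have "r \<in> FV p"
    using adm \<open>r \<in> B\<close> by auto
  have "\<forall>e\<in>E. twin e \<in> X \<longrightarrow> e \<in> B \<or> twin e \<in> B"
  proof (intro ballI impI)
    fix e assume "e \<in> E" "twin e \<in> X"
    then have "e \<in> FV p" "twin e = r \<or> twin e = twin r"
      using adm \<open>X \<subseteq> {r, twin r}\<close> by auto
    then have "twin e = r \<or> e = r"
      using twin_twin[OF \<open>e \<in> FV p\<close>] twin_twin[OF \<open>r \<in> FV p\<close>] by metis
    then show "e \<in> B \<or> twin e \<in> B"
      using \<open>r \<in> B\<close> by blast
  qed
  then show ?thesis
    by auto
qed

lemma quad_le_drop_atomic:
  assumes le: "quad_le (EH, LH, BH) (E, L, B)" and "r \<notin> BH"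
  shows "quad_le (EH, LH, BH) (E - ({r, twin r} - EH), L, B - {r})"
proof -
  let ?X = "{r, twin r} - EH"
  have "EH \<subseteq> E - ?X" "LH \<subseteq> L" "BH \<subseteq> B - {r}"
    using le \<open>r \<notin> BH\<close> by auto
  moreover have "\<forall>e\<in>EH. twin e \<notin> EH \<longrightarrow> twin e \<in> E - ?X \<longrightarrow> e \<in> B - {r} \<or> twin e \<in> B - {r}"
  proof (intro ballI impI)
    fix e assume "e \<in> EH" "twin e \<notin> EH" "twin e \<in> E - ?X"
    then have "e \<in> B \<or> twin e \<in> B" "e \<noteq> r" "twin e \<noteq> r"
      using le by auto
    then show "e \<in> B - {r} \<or> twin e \<in> B - {r}"
      by blast
  qed
  ultimately show ?thesis
    by simp
qed

lemma covered_s_quad_eqI: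
  assumes H: "is_pdCG p \<tau> H" and G: "is_pdCG p \<tau> G" and cov: "covered_s p \<tau> H G"
    and Q: "admissible Q" "quad_le (quad p q \<tau> H) Q" "quad_le Q (quad p q \<tau> G)"
    and ne: "Q \<noteq> quad p q \<tau> G"
  shows "quad p q \<tau> H = Q"
proof -
  have F: "is_pdCG p \<tau> (graph_of Q)" "quad p q \<tau> (graph_of Q) = Q"
    using pdCG_graph_of quad_graph_of Q(1) by blast+
  then have "sub_s H (graph_of Q)" "sub_s (graph_of Q) G" "graph_of Q \<noteq> G"
    using Q ne H G sub_s_iff_quad_le by auto
  then have "H = graph_of Q"
    using cov F(1) unfolding covered_s_def by blast
  then show ?thesis
    using F(2) by simp
qed

lemma covered_s_drop_atomic:
  assumes H: "is_pdCG p \<tau> H" and G: "is_pdCG p \<tau> G" and cov: "covered_s p \<tau> H G"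
    and r: "r \<in> Ebb p \<tau> G" "r \<notin> Ebb p \<tau> H"
  shows "quad p q \<tau> H = (edges G - ({r, twin r} - edges H), Lbb q G, Ebb p \<tau> G - {r})"
proof -
  obtain E L B EH LH BH where qG: "quad p q \<tau> G = (E, L, B)" and qH: "quad p q \<tau> H = (EH, LH, BH)"
    by (cases "quad p q \<tau> G"; cases "quad p q \<tau> H")
  then have comps: "edges G = E" "Lbb q G = L" "Ebb p \<tau> G = B" "edges H = EH" "Ebb p \<tau> H = BH"
    by (simp_all add: quad_def)
  have adm: "admissible (E, L, B)"
    using admissible_quad[OF G] qG by simp
  have "sub_s H G"
    using cov unfolding covered_s_def by blast
  then have le: "quad_le (EH, LH, BH) (E, L, B)"
    using sub_s_iff_quad_le[OF H G] qG qH by simp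
  let ?X = "{r, twin r} - EH"
  have rB: "r \<in> B" "r \<notin> BH"
    using r comps by simp_all
  have "?X \<subseteq> {r, twin r}"
    by blast
  note Q = admissible_drop_atomic[OF adm rB(1) this] drop_atomic_quad_le[OF adm rB(1) this]
  have HQ: "quad_le (EH, LH, BH) (E - ?X, L, B - {r})"
    using quad_le_drop_atomic[OF le rB(2)] .
  have ne: "(E - ?X, L, B - {r}) \<noteq> (E, L, B)"
    using rB by auto
  have "(EH, LH, BH) = (E - ?X, L, B - {r})"
    by (rule covered_s_quad_eqI[OF H G cov Q(1), unfolded qG qH]) (fact HQ Q(2) ne)+
  then show ?thesis
    using comps qH by simp
qed

lemma covered_s_twin_broken_atomic:
  assumes G: "is_pdCG p \<tau> G" and H1: "is_pdCG p \<tau> H1" and H2: "is_pdCG p \<tau> H2"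
    and cov1: "covered_s p \<tau> H1 G" and cov2: "covered_s p \<tau> H2 G"
    and not_le: "\<not> sub_t p q \<tau> H2 H1"
    and e: "e \<in> edges H1" "e \<in> edges H2" "twin e \<in> edges H1" "twin e \<notin> edges H2"
  shows "e \<in> Ebb p \<tau> H1 \<or> twin e \<in> Ebb p \<tau> H1"
proof (rule ccontr)
  assume not_atomic: "\<not> (e \<in> Ebb p \<tau> H1 \<or> twin e \<in> Ebb p \<tau> H1)"
  have "sub_s H1 G" "sub_s H2 G"
    using cov1 cov2 unfolding covered_s_def by blast+
  moreover have "twin e \<in> edges G"
    using e(3) \<open>sub_s H1 G\<close> unfolding sub_s_def by blast
  ultimately obtain r where r: "r \<in> Ebb p \<tau> G" "r \<in> {e, twin e}" "{r, twin r} = {e, twin e}"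
    using sub_s_broken_pair_atomic[OF H2 G _ e(2,4)] by blast
  have "quad p q \<tau> H1 = (edges G - ({r, twin r} - edges H1), Lbb q G, Ebb p \<tau> G - {r})"
    using covered_s_drop_atomic[OF H1 G cov1 r(1)] r(2) not_atomic by blast
  then have H1_eq: "edges H1 = edges G" "Lbb q H1 = Lbb q G" "Ebb p \<tau> H1 = Ebb p \<tau> G - {r}"
    using r(3) e(1,3) by (auto simp: quad_def)
  have "{r, twin r} \<subseteq> edges H2" if "r \<in> Ebb p \<tau> H2"
    using admissible_quad[OF H2] that by (auto simp: quad_def)
  then have "r \<notin> Ebb p \<tau> H2"
    using r(3) e(4) by blast
  moreover have "quad_le (quad p q \<tau> H2) (quad p q \<tau> G)"
    using sub_s_iff_quad_le[OF H2 G] \<open>sub_s H2 G\<close> by blast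
  ultimately have "sub_t p q \<tau> H2 H1"
    using H1_eq by (auto simp: sub_t_def quad_def)
  then show False
    using not_le by blast
qed

lemma quad_meet_s_twin_incomparable:
  assumes G: "is_pdCG p \<tau> G" and H1: "is_pdCG p \<tau> H1" and H2: "is_pdCG p \<tau> H2"
    and cov1: "covered_s p \<tau> H1 G" and cov2: "covered_s p \<tau> H2 G"
    and "\<not> sub_t p q \<tau> H1 H2" "\<not> sub_t p q \<tau> H2 H1"
  shows "quad p q \<tau> (meet_s p \<tau> H1 H2) = meet_t p q \<tau> H1 H2"
proof -
  have "\<forall>e\<in>edges H1 \<inter> edges H2.
      (twin e \<in> edges H1 - edges H2 \<longrightarrow> e \<in> Ebb p \<tau> H1 \<or> twin e \<in> Ebb p \<tau> H1) \<and>
      (twin e \<in> edges H2 - edges H1 \<longrightarrow> e \<in> Ebb p \<tau> H2 \<or> twin e \<in> Ebb p \<tau> H2)"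
    using covered_s_twin_broken_atomic[OF G H1 H2 cov1 cov2]
      covered_s_twin_broken_atomic[OF G H2 H1 cov2 cov1] assms(6,7) by blast
  then have "{e \<in> edges H1 \<inter> edges H2.
      (twin e \<in> edges H1 - edges H2 \<longrightarrow> e \<in> Ebb p \<tau> H1 \<or> twin e \<in> Ebb p \<tau> H1) \<and>
      (twin e \<in> edges H2 - edges H1 \<longrightarrow> e \<in> Ebb p \<tau> H2 \<or> twin e \<in> Ebb p \<tau> H2)} =
      edges H1 \<inter> edges H2"
    by blast
  then show ?thesis
    using quad_meet_s[OF H1 H2] by (simp add: meet_t_def qmeet_def quad_def)
qed

lemma covered_s_twin_le:
  assumes G: "is_pdCG p \<tau> G" and H1: "is_pdCG p \<tau> H1" and H2: "is_pdCG p \<tau> H2"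
    and cov1: "covered_s p \<tau> H1 G" and cov2: "covered_s p \<tau> H2 G"
    and le: "sub_t p q \<tau> H1 H2" and ne: "H1 \<noteq> H2"
  obtains r x where "r \<in> Ebb p \<tau> G" "x \<in> {r, twin r}"
    "quad p q \<tau> H2 = (edges G, Lbb q G, Ebb p \<tau> G - {r})"
    "quad p q \<tau> H1 = (edges G - {x}, Lbb q G, Ebb p \<tau> G - {r})"
proof -
  have "sub_s H2 G" "H2 \<noteq> G"
    using cov2 unfolding covered_s_def by blast+
  then have "\<not> sub_s H1 H2"
    using cov1 H2 ne unfolding covered_s_def by blast
  then have "\<not> quad_le (quad p q \<tau> H1) (quad p q \<tau> H2)"
    using sub_s_iff_quad_le H1 H2 by blast
  then obtain e where e: "e \<in> edges H1" "twin e \<notin> edges H1" "twin e \<in> edges H2"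
      "e \<notin> Ebb p \<tau> H2" "twin e \<notin> Ebb p \<tau> H2"
    using le by (auto simp: sub_t_def quad_def)
  have "sub_s H1 G"
    using cov1 unfolding covered_s_def by blast
  moreover have "twin e \<in> edges G"
    using e(3) \<open>sub_s H2 G\<close> unfolding sub_s_def by blast
  ultimately obtain r where r: "r \<in> Ebb p \<tau> G" "r \<in> {e, twin e}" "{r, twin r} = {e, twin e}"
    using sub_s_broken_pair_atomic[OF H1 G _ e(1,2)] by blast
  have "r \<notin> Ebb p \<tau> H2" "r \<notin> Ebb p \<tau> H1"
    using r(2) e(4,5) le by (auto simp: sub_t_def)
  moreover have "e \<in> edges H2"
    using e(1) le by (auto simp: sub_t_def)
  ultimately have "quad p q \<tau> H2 = (edges G, Lbb q G, Ebb p \<tau> G - {r})"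
      "quad p q \<tau> H1 = (edges G - {twin e}, Lbb q G, Ebb p \<tau> G - {r})"
    using covered_s_drop_atomic[OF H2 G cov2 r(1)] covered_s_drop_atomic[OF H1 G cov1 r(1)]
      r(3) e(1-3) by auto
  moreover have "twin e \<in> {r, twin r}"
    using r(3) by blast
  ultimately show ?thesis
    using that r(1) by blast
qed

lemma meet_quad_remove_edge:
  assumes "E \<subseteq> FV p" "x \<in> E" "x \<notin> B" "twin x \<notin> B"
  shows "meet_quad (E - {x}, L, B) (E, L, B) = (E - {x, twin x}, L, B)"
proof -
  have "x \<in> FV p"
    using assms by blast
  have "e \<in> fst (meet_quad (E - {x}, L, B) (E, L, B)) \<longleftrightarrow> e \<in> E - {x, twin x}" for e
  proof (cases "e \<in> E")
    case True
    then have "e \<in> FV p"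
      using assms by blast
    then have "twin e = x \<longleftrightarrow> e = twin x"
      using twin_twin[OF \<open>e \<in> FV p\<close>] twin_twin[OF \<open>x \<in> FV p\<close>] by auto
    then show ?thesis
      using True assms(2-4) by auto
  qed simp
  then show ?thesis
    by auto
qed

lemma quad_meet_s_twin_le:
  assumes G: "is_pdCG p \<tau> G" and H1: "is_pdCG p \<tau> H1" and H2: "is_pdCG p \<tau> H2"
    and cov1: "covered_s p \<tau> H1 G" and cov2: "covered_s p \<tau> H2 G"
    and le: "sub_t p q \<tau> H1 H2" and ne: "H1 \<noteq> H2"
  obtains r x where "r \<in> Ebb p \<tau> G" "x \<in> {r, twin r}"
    "quad p q \<tau> H2 = (edges G, Lbb q G, Ebb p \<tau> G - {r})"
    "quad p q \<tau> H1 = (edges G - {x}, Lbb q G, Ebb p \<tau> G - {r})"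
    "quad p q \<tau> (meet_s p \<tau> H1 H2) = (edges G - {r, twin r}, Lbb q G, Ebb p \<tau> G - {r})"
proof -
  obtain r x where r: "r \<in> Ebb p \<tau> G" "x \<in> {r, twin r}"
    and H2_eq: "quad p q \<tau> H2 = (edges G, Lbb q G, Ebb p \<tau> G - {r})"
    and H1_eq: "quad p q \<tau> H1 = (edges G - {x}, Lbb q G, Ebb p \<tau> G - {r})"
    using covered_s_twin_le[OF G H1 H2 cov1 cov2 le ne] by blast
  have adm: "admissible (edges G, Lbb q G, Ebb p \<tau> G)"
    using admissible_quad[OF G] by (simp add: quad_def)
  have rFV: "r \<in> FV p" "r \<in> FL p \<tau>"
    using adm r(1) by auto
  have pair: "{x, twin x} = {r, twin r}"
    using twin_doubleton_eq[OF rFV(1) r(2)] .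
  have "twin r \<notin> Ebb p \<tau> G"
    using twin_FL_notin_FL[OF rFV(2)] adm by auto
  moreover have "x \<in> {r, twin r}" "twin x \<in> {r, twin r}"
    using pair by blast+
  ultimately have "x \<in> edges G" "x \<notin> Ebb p \<tau> G - {r}" "twin x \<notin> Ebb p \<tau> G - {r}"
    using adm r(1) by auto
  then have "meet_quad (quad p q \<tau> H1) (quad p q \<tau> H2) =
      (edges G - {x, twin x}, Lbb q G, Ebb p \<tau> G - {r})"
    unfolding H1_eq H2_eq using adm by (intro meet_quad_remove_edge) auto
  then have "quad p q \<tau> (meet_s p \<tau> H1 H2) = (edges G - {r, twin r}, Lbb q G, Ebb p \<tau> G - {r})"
    using quad_meet_s[OF H1 H2] pair by simp
  then show ?thesis
    using that r H1_eq H2_eq by blast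
qed

end

theorem corollary10:
  fixes p q :: nat and \<tau> :: "nat \<Rightarrow> nat" and H1 H2 G :: cgraph
  assumes tp: "twin_pairing p \<tau>"
    and qp: "q \<le> p"
    and LR: "\<tau> ` {1..q} = {q+1..p}"
    and pdG: "is_pdCG p \<tau> G" and pd1: "is_pdCG p \<tau> H1" and pd2: "is_pdCG p \<tau> H2"
    and cov1: "covered_s p \<tau> H1 G" and cov2: "covered_s p \<tau> H2 G"
    and ne: "H1 \<noteq> H2"
  shows "(\<not> sub_t p q \<tau> H1 H2 \<and> \<not> sub_t p q \<tau> H2 H1 \<longrightarrow>
            quad p q \<tau> (meet_s p \<tau> H1 H2) = meet_t p q \<tau> H1 H2)
       \<and> (sub_t p q \<tau> H1 H2 \<longrightarrow>
            (\<exists>e\<in>Ebb p \<tau> G. \<exists>Q'.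
               quad p q \<tau> H2 = (edges G, Lbb q G, Ebb p \<tau> G - {e}) \<and>
               {quad p q \<tau> H1, Q'} =
                 {(edges G - {e}, Lbb q G, Ebb p \<tau> G - {e}),
                  (edges G - {tau_e \<tau> e}, Lbb q G, Ebb p \<tau> G - {e})} \<and>
               quad p q \<tau> (meet_s p \<tau> H1 H2) = qmeet (quad p q \<tau> H1) Q'))"
proof -
  interpret paired_data p q \<tau>
    using tp qp LR by unfold_locales
  let ?E = "edges G" and ?L = "Lbb q G" and ?B = "Ebb p \<tau> G"
  have "\<exists>e\<in>?B. \<exists>Q'. quad p q \<tau> H2 = (?E, ?L, ?B - {e}) \<and>
      {quad p q \<tau> H1, Q'} = {(?E - {e}, ?L, ?B - {e}), (?E - {twin e}, ?L, ?B - {e})} \<and>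
      quad p q \<tau> (meet_s p \<tau> H1 H2) = qmeet (quad p q \<tau> H1) Q'"
    if le: "sub_t p q \<tau> H1 H2"
  proof -
    obtain r x where r: "r \<in> ?B" "x \<in> {r, twin r}"
      and H2: "quad p q \<tau> H2 = (?E, ?L, ?B - {r})" and H1: "quad p q \<tau> H1 = (?E - {x}, ?L, ?B - {r})"
      and meet: "quad p q \<tau> (meet_s p \<tau> H1 H2) = (?E - {r, twin r}, ?L, ?B - {r})"
      using quad_meet_s_twin_le[OF pdG pd1 pd2 cov1 cov2 le ne] by blast
    define y where "y = (if x = r then twin r else r)"
    have xy: "x = r \<and> y = twin r \<or> x = twin r \<and> y = r"
      using r(2) unfolding y_def by auto
    then have "{quad p q \<tau> H1, (?E - {y}, ?L, ?B - {r})} =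
        {(?E - {r}, ?L, ?B - {r}), (?E - {twin r}, ?L, ?B - {r})}"
      unfolding H1 by (auto simp: insert_commute)
    moreover have "quad p q \<tau> (meet_s p \<tau> H1 H2) = qmeet (quad p q \<tau> H1) (?E - {y}, ?L, ?B - {r})"
      using xy unfolding meet H1 qmeet_def by auto
    ultimately show ?thesis
      using r(1) H2 by blast
  qed
  then show ?thesis
    using quad_meet_s_twin_incomparable[OF pdG pd1 pd2 cov1 cov2] by blast
qed

end
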